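(* Suppose Assumption A holds, $x^\star$ is the weak-Minty solution of A(d), and (VrFRBS) uses estimators in class (B) with parameters $\tau,\kappa,\Theta,\hat\Theta,\{\delta_k\},\{\Delta_k\}$. With the convention $y^{-1}:=x^0$, let $$\mathcal Q_k:=\|y^k-x^\star\|^2+\tfrac34\|y^k-x^{k-1}\|^2+\tfrac12\|x^{k-1}-y^{k-1}\|^2+\tfrac{2\eta(1-\tau)}{\tau}\langle e^{k-1},x^\star-y^{k-1}\rangle$$ (i.e. $\gamma=\frac1{4\eta}$, $c_1=\frac{4\eta}{\tau}$ in the general definition) and $$\mathcal L_k:=\mathcal Q_k+\tfrac{\hat\Theta\eta^2}{\kappa}\big(\tfrac{12}{\tau^2}+10\big)\|x^{k-1}-x^{k-2}\|^2+\tfrac{(1-\kappa)\eta^2}{\kappa}\big(\tfrac{12}{\tau^2}+10\big)\Delta_{k-1}+\tfrac{8(1-\tau)^2\eta^2}{\tau^2}\|e^{k-1}\|^2 .$$ Then for all $k\ge0$, almost surely $$\begin{aligned}\mathbb E_k[\mathcal L_{k+1}]\le{}&\mathcal L_k-\Big[\tfrac14-\tfrac{4\rho}{\eta}-\tfrac{L^2\eta}{2}(33\eta+16\rho)\Big]\|y^k-x^k\|^2-\Big[\tfrac14-\tfrac{L^2\eta}{2}(33\eta+16\rho)\Big]\|y^k-x^{k-1}\|^2-\tfrac{8(1-\tau)^2\eta^2}{\tau^2}\|e^{k-1}\|^2\\&-\eta^2\Big[4L^2-\big(\tfrac{12}{\tau^2}+10\big)\tfrac{\Theta+\hat\Theta}{\kappa}\Big]\|x^k-x^{k-1}\|^2+\big(\tfrac{12}{\tau^2}+10\big)\tfrac{\eta^2\delta_k}{\kappa},\end{aligned}$$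 and $\mathcal L_k\ge\frac34\|y^k-x^\star\|^2$ almost surely.
   Context: Setting: $G:\mathbb{R}^p\to\mathbb{R}^p$, $T:\mathbb{R}^p\rightrightarrows\mathbb{R}^p$, $\Phi:=G+T$, $\mathrm{zer}\,\Phi:=\{x:0\in Gx+Tx\}$, $J_{\eta T}:=(\mathbb{I}+\eta T)^{-1}$; (E) $Gx=\mathbb{E}_{\zeta\sim\mathbb P}[\mathbf G(x,\zeta)]$ or (F) $Gx=\frac1n\sum_{i=1}^nG_ix$. Assumption A: (a) $\mathrm{zer}\,\Phi\neq\emptyset$; (b) in (E), $\mathbb{E}_\zeta\|\mathbf G(x,\zeta)-Gx\|^2\le\sigma^2$; (c) in (E), $\mathbb{E}_\zeta\|\mathbf G(x,\zeta)-\mathbf G(y,\zeta)\|^2\le L^2\|x-y\|^2$, in (F), $\frac1n\sum_i\|G_ix-G_iy\|^2\le L^2\|x-y\|^2$ (so $G$ is $L$-Lipschitz); (d) there exist $\rho\ge0$ and $x^\star\in\mathrm{zer}\,\Phi$ with $\langle Gx+v,x-x^\star\rangle\ge-\rho\|Gx+v\|^2$ for all $(x,v)\in\mathrm{gra}\,T$. Scheme (VrFRBS): stepsize $\eta>0$, $x^0$, $x^{-2}=x^{-1}=x^0$, $\xi^0\in Tx^0$; for $k\ge0$: $S^k:=2Gx^k-Gx^{k-1}$, estimator $\widetilde S^k$, $x^{k+1}\in J_{\eta T}(x^k-\eta\widetilde S^k)$, $\xi^{k+1}:=\eta^{-1}(x^k-\eta\widetilde S^k-x^{k+1})\in Tx^{k+1}$.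 Notation: $e^k:=\widetilde S^k-S^k$, $\hat w^k:=Gx^{k-1}+\xi^k$, $y^k:=x^k+\eta\hat w^k$. $\mathcal F_k$: $\sigma$-algebra of all randomness up to iteration $k$; $\mathbb E_k[\cdot]:=\mathbb E[\cdot\mid\mathcal F_k]$. Class (B): there exist nonnegative random variables $\Delta_k$ ($\Delta_{-1}:=0$), $\tau,\kappa\in(0,1]$, $\Theta,\hat\Theta\ge0$, nonnegative $\{\delta_k\}$ such that with $e^{-1}:=0$, a.s. for all $k\ge0$: $\mathbb E_k[e^k]=(1-\tau)e^{k-1}$; $\mathbb E_k\|e^k\|^2\le\mathbb E_k[\Delta_k]$; $\mathbb E_k[\Delta_k]\le(1-\kappa)\Delta_{k-1}+\Theta\|x^k-x^{k-1}\|^2+\hat\Theta\|x^{k-1}-x^{k-2}\|^2+\delta_k$. *)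

theory Defs
  imports "HOL-Probability.Probability"
begin

definition resolvent :: "real \<Rightarrow> ('a::real_vector \<Rightarrow> 'a set) \<Rightarrow> 'a \<Rightarrow> 'a set" where
  "resolvent \<eta> T z = {u. \<exists>v\<in>T u. z = u + \<eta> *\<^sub>R v}"

definition assmA_E :: "('a::euclidean_space \<Rightarrow> 'a) \<Rightarrow> 'z measure \<Rightarrow> ('a \<Rightarrow> 'z \<Rightarrow> 'a)
    \<Rightarrow> real \<Rightarrow> real \<Rightarrow> bool" where
  "assmA_E G P GG \<sigma> L \<longleftrightarrow>
     prob_space P \<and>
     (\<forall>x. integrable P (GG x) \<and> G x = (\<integral>\<zeta>. GG x \<zeta> \<partial>P)) \<and>
     (\<forall>x. (\<integral>\<^sup>+\<zeta>. ennreal ((norm (GG x \<zeta> - G x))\<^sup>2) \<partial>P) \<le> ennreal (\<sigma>\<^sup>2)) \<and>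
     (\<forall>x y. (\<integral>\<^sup>+\<zeta>. ennreal ((norm (GG x \<zeta> - GG y \<zeta>))\<^sup>2) \<partial>P) \<le> ennreal (L\<^sup>2 * (norm (x - y))\<^sup>2))"

definition assmA_F :: "('a::euclidean_space \<Rightarrow> 'a) \<Rightarrow> nat \<Rightarrow> (nat \<Rightarrow> 'a \<Rightarrow> 'a) \<Rightarrow> real \<Rightarrow> bool" where
  "assmA_F G n Gi L \<longleftrightarrow>
     n \<ge> 1 \<and>
     (\<forall>x. G x = (1 / real n) *\<^sub>R (\<Sum>i<n. Gi i x)) \<and>
     (\<forall>x y. (1 / real n) * (\<Sum>i<n. (norm (Gi i x - Gi i y))\<^sup>2) \<le> L\<^sup>2 * (norm (x - y))\<^sup>2)"

definition weak_minty :: "('a::real_inner \<Rightarrow> 'a) \<Rightarrow> ('a \<Rightarrow> 'a set) \<Rightarrow> real \<Rightarrow> 'a \<Rightarrow> bool" where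
  "weak_minty G T \<rho> xs \<longleftrightarrow>
     \<rho> \<ge> 0 \<and> (\<exists>v\<in>T xs. G xs + v = 0) \<and>
     (\<forall>x v. v \<in> T x \<longrightarrow> inner (G x + v) (x - xs) \<ge> - \<rho> * (norm (G x + v))\<^sup>2)"

(* Index conventions: sequences are indexed by nat; x (k - 1) with truncated
   subtraction realises x^{-1} = x^{-2} = x^0. *)

definition yv :: "real \<Rightarrow> ('a::real_normed_vector \<Rightarrow> 'a) \<Rightarrow> (nat \<Rightarrow> 'w \<Rightarrow> 'a)
    \<Rightarrow> (nat \<Rightarrow> 'w \<Rightarrow> 'a) \<Rightarrow> nat \<Rightarrow> 'w \<Rightarrow> 'a" where
  "yv \<eta> G x \<xi> k \<omega> = x k \<omega> + \<eta> *\<^sub>R (G (x (k - 1) \<omega>) + \<xi> k \<omega>)"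

definition yprev :: "real \<Rightarrow> ('a::real_normed_vector \<Rightarrow> 'a) \<Rightarrow> (nat \<Rightarrow> 'w \<Rightarrow> 'a)
    \<Rightarrow> (nat \<Rightarrow> 'w \<Rightarrow> 'a) \<Rightarrow> nat \<Rightarrow> 'w \<Rightarrow> 'a" where
  "yprev \<eta> G x \<xi> k \<omega> = (if k = 0 then x 0 \<omega> else yv \<eta> G x \<xi> (k - 1) \<omega>)"

definition errv :: "('a::real_normed_vector \<Rightarrow> 'a) \<Rightarrow> (nat \<Rightarrow> 'w \<Rightarrow> 'a)
    \<Rightarrow> (nat \<Rightarrow> 'w \<Rightarrow> 'a) \<Rightarrow> nat \<Rightarrow> 'w \<Rightarrow> 'a" where
  "errv G x St k \<omega> = St k \<omega> - (2 *\<^sub>R G (x k \<omega>) - G (x (k - 1) \<omega>))"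

definition eprev :: "('a::real_normed_vector \<Rightarrow> 'a) \<Rightarrow> (nat \<Rightarrow> 'w \<Rightarrow> 'a)
    \<Rightarrow> (nat \<Rightarrow> 'w \<Rightarrow> 'a) \<Rightarrow> nat \<Rightarrow> 'w \<Rightarrow> 'a" where
  "eprev G x St k \<omega> = (if k = 0 then 0 else errv G x St (k - 1) \<omega>)"

definition Dprev :: "(nat \<Rightarrow> 'w \<Rightarrow> real) \<Rightarrow> nat \<Rightarrow> 'w \<Rightarrow> real" where
  "Dprev \<Delta> k \<omega> = (if k = 0 then 0 else \<Delta> (k - 1) \<omega>)"

definition classB :: "'w measure \<Rightarrow> (nat \<Rightarrow> 'w measure) \<Rightarrow> ('a::euclidean_space \<Rightarrow> 'a)
    \<Rightarrow> (nat \<Rightarrow> 'w \<Rightarrow> 'a) \<Rightarrow> (nat \<Rightarrow> 'w \<Rightarrow> 'a) \<Rightarrow> (nat \<Rightarrow> 'w \<Rightarrow> real)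
    \<Rightarrow> real \<Rightarrow> real \<Rightarrow> real \<Rightarrow> real \<Rightarrow> (nat \<Rightarrow> real) \<Rightarrow> bool" where
  "classB M F G x St \<Delta> \<tau> \<kappa> \<Theta> \<Theta>h \<delta> \<longleftrightarrow>
     0 < \<tau> \<and> \<tau> \<le> 1 \<and> 0 < \<kappa> \<and> \<kappa> \<le> 1 \<and> \<Theta> \<ge> 0 \<and> \<Theta>h \<ge> 0 \<and>
     (\<forall>k. \<delta> k \<ge> 0) \<and>
     (\<forall>k. \<Delta> k \<in> borel_measurable M \<and> (\<forall>\<omega>\<in>space M. \<Delta> k \<omega> \<ge> 0)) \<and>
     (\<forall>k. \<forall>b\<in>Basis. AE \<omega> in M.
        real_cond_exp M (F k) (\<lambda>\<omega>. errv G x St k \<omega> \<bullet> b) \<omega> = (1 - \<tau>) * (eprev G x St k \<omega> \<bullet> b)) \<and>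
     (\<forall>k. AE \<omega> in M.
        real_cond_exp M (F k) (\<lambda>\<omega>. (norm (errv G x St k \<omega>))\<^sup>2) \<omega> \<le> real_cond_exp M (F k) (\<Delta> k) \<omega>) \<and>
     (\<forall>k. AE \<omega> in M.
        real_cond_exp M (F k) (\<Delta> k) \<omega> \<le> (1 - \<kappa>) * Dprev \<Delta> k \<omega>
           + \<Theta> * (norm (x k \<omega> - x (k - 1) \<omega>))\<^sup>2
           + \<Theta>h * (norm (x (k - 1) \<omega> - x (k - 2) \<omega>))\<^sup>2 + \<delta> k)"

definition Qk :: "real \<Rightarrow> real \<Rightarrow> ('a::real_inner \<Rightarrow> 'a) \<Rightarrow> (nat \<Rightarrow> 'w \<Rightarrow> 'a) \<Rightarrow> (nat \<Rightarrow> 'w \<Rightarrow> 'a)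
    \<Rightarrow> (nat \<Rightarrow> 'w \<Rightarrow> 'a) \<Rightarrow> 'a \<Rightarrow> nat \<Rightarrow> 'w \<Rightarrow> real" where
  "Qk \<eta> \<tau> G x \<xi> St xs k \<omega> =
     (norm (yv \<eta> G x \<xi> k \<omega> - xs))\<^sup>2
     + 3/4 * (norm (yv \<eta> G x \<xi> k \<omega> - x (k - 1) \<omega>))\<^sup>2
     + 1/2 * (norm (x (k - 1) \<omega> - yprev \<eta> G x \<xi> k \<omega>))\<^sup>2
     + 2 * \<eta> * (1 - \<tau>) / \<tau> * inner (eprev G x St k \<omega>) (xs - yprev \<eta> G x \<xi> k \<omega>)"

definition Lk :: "real \<Rightarrow> real \<Rightarrow> real \<Rightarrow> real \<Rightarrow> ('a::real_inner \<Rightarrow> 'a) \<Rightarrow> (nat \<Rightarrow> 'w \<Rightarrow> 'a)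
    \<Rightarrow> (nat \<Rightarrow> 'w \<Rightarrow> 'a) \<Rightarrow> (nat \<Rightarrow> 'w \<Rightarrow> 'a) \<Rightarrow> (nat \<Rightarrow> 'w \<Rightarrow> real) \<Rightarrow> 'a \<Rightarrow> nat \<Rightarrow> 'w \<Rightarrow> real" where
  "Lk \<eta> \<tau> \<kappa> \<Theta>h G x \<xi> St \<Delta> xs k \<omega> =
     Qk \<eta> \<tau> G x \<xi> St xs k \<omega>
     + \<Theta>h * \<eta>\<^sup>2 / \<kappa> * (12 / \<tau>\<^sup>2 + 10) * (norm (x (k - 1) \<omega> - x (k - 2) \<omega>))\<^sup>2
     + (1 - \<kappa>) * \<eta>\<^sup>2 / \<kappa> * (12 / \<tau>\<^sup>2 + 10) * Dprev \<Delta> k \<omega>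
     + 8 * (1 - \<tau>)\<^sup>2 * \<eta>\<^sup>2 / \<tau>\<^sup>2 * (norm (eprev G x St k \<omega>))\<^sup>2"

end

theory Submission
  imports Defs
begin

(* Write y^(k+1) = ybar^k - eta e^k with ybar^k = x^k - eta (G x^k - G x^(k-1)), which is
   F_k-measurable. Then Q_(k+1) is a quadratic polynomial in the estimator error e^k with
   F_k-measurable coefficients, and its conditional expectation only involves
   E_k[e^k] = (1 - tau) e^(k-1) and E_k ||e^k||^2. The noise-free part decreases by the weak
   Minty inequality at (x^k, xi^k), since G x^k + xi^k = (y^k - x^k)/eta + (G x^k - G x^(k-1)),
   combined with the Lipschitz bound on G; the cross terms with e^(k-1) are absorbed by
   Young's inequality. Finally (1 - tau)^2 ||e^(k-1)||^2 <= E_k ||e^k||^2 <= E_k Delta_k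
   (conditional Jensen and class (B)), and the recursion for Delta_k is what the extra
   terms of L_k are designed to telescope. *)

section \<open>Inner-product inequalities\<close>

lemma power2_norm_diff_scaleR:
  fixes a b :: "'a::real_inner"
  shows "(norm (a - c *\<^sub>R b))\<^sup>2 = (norm a)\<^sup>2 - 2 * c * inner a b + c\<^sup>2 * (norm b)\<^sup>2"
  unfolding power2_norm_eq_inner by (simp add: inner_simps inner_commute algebra_simps power2_eq_square)

lemma young_inner:
  fixes u v :: "'a::real_inner"
  assumes "0 < \<epsilon>"
  shows "2 * inner u v \<le> \<epsilon> * (norm u)\<^sup>2 + (norm v)\<^sup>2 / \<epsilon>"
proof -
  have "0 \<le> (norm (\<epsilon> *\<^sub>R u - v))\<^sup>2 / \<epsilon>" using assms by simp
  also have "\<dots> = \<epsilon> * (norm u)\<^sup>2 - 2 * inner u v + (norm v)\<^sup>2 / \<epsilon>"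
    using assms unfolding power2_norm_eq_inner
    by (simp add: inner_diff_left inner_diff_right inner_commute field_simps power2_eq_square)
  finally show ?thesis by simp
qed

lemma young_inner_scaled:
  fixes u v :: "'a::real_inner"
  assumes "0 < \<epsilon>"
  shows "2 * a * inner u v \<le> \<epsilon> * a\<^sup>2 * (norm u)\<^sup>2 + (norm v)\<^sup>2 / \<epsilon>"
  using young_inner[OF assms, of "a *\<^sub>R u" v] by (simp add: power_mult_distrib mult.assoc)

lemma error_absorption:
  fixes E u v w z :: "'a::real_inner" and a \<tau> :: real
  assumes "0 < \<tau>" "\<tau> \<le> 1"
  shows "2 * a * inner E u + 7/2 * a * inner E z - 2 * a / \<tau> * inner E (v + w)
         \<le> a\<^sup>2 * (4 / \<tau>\<^sup>2 + 16 / \<tau> + 1/4) * (norm E)\<^sup>2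
           + (norm u)\<^sup>2 / 4 + (norm z)\<^sup>2 / 4 + (norm v)\<^sup>2 / 2 + (norm w)\<^sup>2 / 2"
proof -
  have "2 * a * inner E u \<le> 4 * (a\<^sup>2 * (norm E)\<^sup>2) + (norm u)\<^sup>2 / 4"
    using young_inner_scaled[of 4 a E u] by simp
  moreover have "7/2 * a * inner E z \<le> 49/4 * (a\<^sup>2 * (norm E)\<^sup>2) + (norm z)\<^sup>2 / 4"
    using young_inner_scaled[of 4 "7/4 * a" E z] by (simp add: power2_eq_square algebra_simps)
  moreover have "- (2 * a / \<tau> * inner E v) \<le> 2 * (a\<^sup>2 / \<tau>\<^sup>2 * (norm E)\<^sup>2) + (norm v)\<^sup>2 / 2"
    and "- (2 * a / \<tau> * inner E w) \<le> 2 * (a\<^sup>2 / \<tau>\<^sup>2 * (norm E)\<^sup>2) + (norm w)\<^sup>2 / 2"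
    using young_inner_scaled[of 2 "- a / \<tau>" E v] young_inner_scaled[of 2 "- a / \<tau>" E w]
    by (simp_all add: power_divide)
  moreover have "16 * (a\<^sup>2 * (norm E)\<^sup>2) \<le> 16 * (a\<^sup>2 / \<tau> * (norm E)\<^sup>2)"
    using assms by (simp add: divide_simps mult_left_le)
  moreover have "a\<^sup>2 * (4 / \<tau>\<^sup>2 + 16 / \<tau> + 1/4) * (norm E)\<^sup>2
      = 4 * (a\<^sup>2 / \<tau>\<^sup>2 * (norm E)\<^sup>2) + 16 * (a\<^sup>2 / \<tau> * (norm E)\<^sup>2) + 1/4 * (a\<^sup>2 * (norm E)\<^sup>2)"
    by (simp add: algebra_simps)
  moreover have "2 * a / \<tau> * inner E (v + w) = 2 * a / \<tau> * inner E v + 2 * a / \<tau> * inner E w"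
    by (simp add: inner_add_right distrib_left)
  ultimately show ?thesis by linarith
qed

lemma lyapunov_lower_bound_vec:
  fixes Y Xp Yp E xs :: "'a::real_inner" and a :: real
  shows "3/4 * (norm (Y - xs))\<^sup>2 \<le> (norm (Y - xs))\<^sup>2 + 3/4 * (norm (Y - Xp))\<^sup>2
          + 1/2 * (norm (Xp - Yp))\<^sup>2 + 2 * a * inner E (xs - Yp) + 8 * a\<^sup>2 * (norm E)\<^sup>2"
proof -
  have "2 * a * inner E (xs - Yp) = 2 * a * inner E (xs - Y) + 2 * a * inner E (Y - Xp) + 2 * a * inner E (Xp - Yp)"
    by (simp add: inner_diff_right algebra_simps)
  moreover have "2 * (- a) * inner E (xs - Y) \<le> 4 * (- a)\<^sup>2 * (norm E)\<^sup>2 + (norm (Y - xs))\<^sup>2 / 4"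
    using young_inner_scaled[of 4 "- a" E "xs - Y"] by (simp add: norm_minus_commute)
  moreover have "2 * (- a) * inner E (Y - Xp) \<le> 4/3 * (- a)\<^sup>2 * (norm E)\<^sup>2 + (norm (Y - Xp))\<^sup>2 / (4/3)"
    using young_inner_scaled[of "4/3" "- a" E "Y - Xp"] by simp
  moreover have "2 * (- a) * inner E (Xp - Yp) \<le> 2 * (- a)\<^sup>2 * (norm E)\<^sup>2 + (norm (Xp - Yp))\<^sup>2 / 2"
    using young_inner_scaled[of 2 "- a" E "Xp - Yp"] by simp
  moreover have "0 \<le> a\<^sup>2 * (norm E)\<^sup>2" by simp
  ultimately show ?thesis by (simp add: power2_eq_square algebra_simps)
qed

(* The Gram-matrix form of frb_step_weak_minty below, for r = Y - xs, h = Y - X, q = Y - Xp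
   and g. *)
lemma frb_step_gram:
  fixes \<eta> \<rho> L rr hh gg qq rh rg hg qh :: real
  assumes "0 < \<eta>" "0 \<le> \<rho>"
    and "0 \<le> rh/\<eta> - hh/\<eta> + rg - hg + \<rho> * (hh/\<eta>\<^sup>2 + 2*hg/\<eta> + gg)"
    and "gg \<le> L\<^sup>2 * (qq - 2*qh + hh)"
    and "0 \<le> hh/\<eta>\<^sup>2 - 2*hg/\<eta> + gg" "0 \<le> qq + 2*qh + hh" "0 \<le> hh" "0 \<le> qq"
  defines "c \<equiv> L\<^sup>2 * \<eta> / 2 * (33 * \<eta> + 16 * \<rho>)"
  shows "(rr + hh + \<eta>\<^sup>2*gg - 2*rh - 2*\<eta>*rg + 2*\<eta>*hg) + \<eta>\<^sup>2 * gg + (1 - 4 * \<rho> / \<eta> - c) * hh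
           + 4 * L\<^sup>2 * \<eta>\<^sup>2 * (qq - 2*qh + hh)
         \<le> rr + c * qq"
proof -
  have "rr + c * qq - ((rr + hh + \<eta>\<^sup>2*gg - 2*rh - 2*\<eta>*rg + 2*\<eta>*hg) + \<eta>\<^sup>2 * gg
        + (1 - 4 * \<rho> / \<eta> - c) * hh + 4 * L\<^sup>2 * \<eta>\<^sup>2 * (qq - 2*qh + hh))
      = 2 * \<eta> * (rh/\<eta> - hh/\<eta> + rg - hg + \<rho> * (hh/\<eta>\<^sup>2 + 2*hg/\<eta> + gg))
        + 2 * \<eta> * \<rho> * (hh/\<eta>\<^sup>2 - 2*hg/\<eta> + gg)
        + (2 * \<eta>\<^sup>2 + 4 * \<eta> * \<rho>) * (L\<^sup>2 * (qq - 2*qh + hh) - gg)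
        + L\<^sup>2 * (6 * \<eta>\<^sup>2 + 4 * \<eta> * \<rho>) * (qq + 2*qh + hh)
        + 9/2 * L\<^sup>2 * \<eta>\<^sup>2 * (hh + qq)"
    using \<open>0 < \<eta>\<close> unfolding c_def by (simp add: field_simps power2_eq_square)
  moreover have "0 \<le> 2 * \<eta> * (rh/\<eta> - hh/\<eta> + rg - hg + \<rho> * (hh/\<eta>\<^sup>2 + 2*hg/\<eta> + gg))"
    and "0 \<le> 2 * \<eta> * \<rho> * (hh/\<eta>\<^sup>2 - 2*hg/\<eta> + gg)"
    and "0 \<le> (2 * \<eta>\<^sup>2 + 4 * \<eta> * \<rho>) * (L\<^sup>2 * (qq - 2*qh + hh) - gg)"
    and "0 \<le> L\<^sup>2 * (6 * \<eta>\<^sup>2 + 4 * \<eta> * \<rho>) * (qq + 2*qh + hh)"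
    and "0 \<le> 9/2 * L\<^sup>2 * \<eta>\<^sup>2 * (hh + qq)"
    using assms by simp_all
  ultimately show ?thesis by linarith
qed

lemma frb_step_weak_minty:
  fixes X Xp Y xs g :: "'a::real_inner" and \<eta> \<rho> L :: real
  assumes "0 < \<eta>" "0 \<le> \<rho>"
    and lip: "(norm g)\<^sup>2 \<le> L\<^sup>2 * (norm (X - Xp))\<^sup>2"
    and minty: "inner ((1/\<eta>) *\<^sub>R (Y - X) + g) (X - xs) \<ge> - \<rho> * (norm ((1/\<eta>) *\<^sub>R (Y - X) + g))\<^sup>2"
  defines "c \<equiv> L\<^sup>2 * \<eta> / 2 * (33 * \<eta> + 16 * \<rho>)"
  shows "(norm (X - \<eta> *\<^sub>R g - xs))\<^sup>2 + \<eta>\<^sup>2 * (norm g)\<^sup>2 + (1 - 4 * \<rho> / \<eta> - c) * (norm (Y - X))\<^sup>2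
           + 4 * L\<^sup>2 * \<eta>\<^sup>2 * (norm (X - Xp))\<^sup>2
         \<le> (norm (Y - xs))\<^sup>2 + c * (norm (Y - Xp))\<^sup>2"
proof -
  define r h q where "r = Y - xs" and "h = Y - X" and "q = Y - Xp"
  have X: "X = xs + r - h" and Xp: "Xp = xs + r - q" and Y: "Y = xs + r"
    by (simp_all add: r_def h_def q_def)
  define rr hh gg qq rh rg hg qh
    where "rr = inner r r" and "hh = inner h h" and "gg = inner g g" and "qq = inner q q"
      and "rh = inner r h" and "rg = inner r g" and "hg = inner h g" and "qh = inner q h"
  note expand = rr_def hh_def gg_def qq_def rh_def rg_def hg_def qh_def
    inner_simps inner_commute algebra_simps power2_eq_square
  have norms: "(norm (X - \<eta> *\<^sub>R g - xs))\<^sup>2 = rr + hh + \<eta>\<^sup>2*gg - 2*rh - 2*\<eta>*rg + 2*\<eta>*hg"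
    "(norm g)\<^sup>2 = gg" "(norm (Y - X))\<^sup>2 = hh" "(norm (Y - xs))\<^sup>2 = rr"
    "(norm (Y - Xp))\<^sup>2 = qq" "(norm (X - Xp))\<^sup>2 = qq - 2*qh + hh"
    unfolding X Xp Y power2_norm_eq_inner by (simp_all add: expand)
  have "inner ((1/\<eta>) *\<^sub>R (Y - X) + g) (X - xs) = rh/\<eta> - hh/\<eta> + rg - hg"
    unfolding X Y by (simp add: expand divide_simps)
  moreover have "(norm ((1/\<eta>) *\<^sub>R (Y - X) + g))\<^sup>2 = hh/\<eta>\<^sup>2 + 2*hg/\<eta> + gg"
    unfolding X Y power2_norm_eq_inner using \<open>0 < \<eta>\<close> by (simp add: expand divide_simps)
  ultimately have "0 \<le> rh/\<eta> - hh/\<eta> + rg - hg + \<rho> * (hh/\<eta>\<^sup>2 + 2*hg/\<eta> + gg)"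
    using minty by simp
  moreover have "gg \<le> L\<^sup>2 * (qq - 2*qh + hh)" using lip unfolding norms .
  moreover have "(norm ((1/\<eta>) *\<^sub>R h - g))\<^sup>2 = hh/\<eta>\<^sup>2 - 2*hg/\<eta> + gg"
    unfolding power2_norm_eq_inner using \<open>0 < \<eta>\<close> by (simp add: expand divide_simps)
  then have "0 \<le> hh/\<eta>\<^sup>2 - 2*hg/\<eta> + gg" by (metis zero_le_power2)
  moreover have "(norm (q + h))\<^sup>2 = qq + 2*qh + hh" unfolding power2_norm_eq_inner by (simp add: expand)
  then have "0 \<le> qq + 2*qh + hh" by (metis zero_le_power2)
  moreover have "0 \<le> hh" "0 \<le> qq" by (simp_all add: expand)
  ultimately show ?thesis
    unfolding norms c_def by (rule frb_step_gram[OF \<open>0 < \<eta>\<close> \<open>0 \<le> \<rho>\<close>])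
qed

(* With X, Xp, Y, Yp, E, g read as x^k, x^(k-1), y^k, y^(k-1), e^(k-1), G x^k - G x^(k-1),
   the left-hand side bounds E_k[Q_(k+1)] once E_k ||e^k||^2 is replaced by its lower bound
   (1 - tau)^2 ||e^(k-1)||^2. *)
lemma frbs_step_inequality:
  fixes X Xp Y Yp E xs g :: "'a::real_inner" and \<eta> \<tau> \<rho> L :: real
  assumes "0 < \<eta>" "0 < \<tau>" "\<tau> \<le> 1" "0 \<le> \<rho>"
    and lip: "(norm g)\<^sup>2 \<le> L\<^sup>2 * (norm (X - Xp))\<^sup>2"
    and minty: "inner ((1/\<eta>) *\<^sub>R (Y - X) + g) (X - xs) \<ge> - \<rho> * (norm ((1/\<eta>) *\<^sub>R (Y - X) + g))\<^sup>2"
  defines "P \<equiv> X - \<eta> *\<^sub>R g"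
  shows "(norm (P - xs))\<^sup>2 + 3/4 * (norm (P - X))\<^sup>2 + 1/2 * (norm (X - Y))\<^sup>2
      + (1 - \<tau>) * inner ((-2*\<eta>) *\<^sub>R (P - xs) - (3/2*\<eta>) *\<^sub>R (P - X) + (2*\<eta>*(1-\<tau>)/\<tau>) *\<^sub>R (xs - Y)) E
      - \<eta>\<^sup>2 * (4/\<tau>\<^sup>2 + 16/\<tau> + 1/4) * (1-\<tau>)\<^sup>2 * (norm E)\<^sup>2
    \<le> (norm (Y - xs))\<^sup>2 + 3/4 * (norm (Y - Xp))\<^sup>2 + 1/2 * (norm (Xp - Yp))\<^sup>2
      + 2*\<eta>*(1-\<tau>)/\<tau> * inner E (xs - Yp)
      - (1/4 - 4*\<rho>/\<eta> - L\<^sup>2*\<eta>/2*(33*\<eta> + 16*\<rho>)) * (norm (Y - X))\<^sup>2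
      - (1/4 - L\<^sup>2*\<eta>/2*(33*\<eta> + 16*\<rho>)) * (norm (Y - Xp))\<^sup>2
      - 4*L\<^sup>2*\<eta>\<^sup>2*(norm (X - Xp))\<^sup>2"
proof -
  define a where "a = (1 - \<tau>) * \<eta>"
  have "(norm (P - xs))\<^sup>2 + \<eta>\<^sup>2 * (norm g)\<^sup>2
      + (1 - 4*\<rho>/\<eta> - L\<^sup>2*\<eta>/2*(33*\<eta> + 16*\<rho>)) * (norm (Y - X))\<^sup>2 + 4*L\<^sup>2*\<eta>\<^sup>2*(norm (X - Xp))\<^sup>2
      \<le> (norm (Y - xs))\<^sup>2 + L\<^sup>2*\<eta>/2*(33*\<eta> + 16*\<rho>) * (norm (Y - Xp))\<^sup>2"
    unfolding P_def using frb_step_weak_minty[OF \<open>0 < \<eta>\<close> \<open>0 \<le> \<rho>\<close> lip minty] .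
  moreover have "2 * a * inner E (Y - X) + 7/2 * a * inner E (\<eta> *\<^sub>R g) - 2 * a / \<tau> * inner E ((Y - Xp) + (Xp - Yp))
      \<le> a\<^sup>2 * (4 / \<tau>\<^sup>2 + 16 / \<tau> + 1/4) * (norm E)\<^sup>2
        + (norm (Y - X))\<^sup>2 / 4 + (norm (\<eta> *\<^sub>R g))\<^sup>2 / 4 + (norm (Y - Xp))\<^sup>2 / 2 + (norm (Xp - Yp))\<^sup>2 / 2"
    by (rule error_absorption[OF \<open>0 < \<tau>\<close> \<open>\<tau> \<le> 1\<close>])
  moreover have "(1 - \<tau>) * inner ((-2*\<eta>) *\<^sub>R (P - xs) - (3/2*\<eta>) *\<^sub>R (P - X) + (2*\<eta>*(1-\<tau>)/\<tau>) *\<^sub>R (xs - Y)) E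
      = - 2 * a / \<tau> * inner E (Y - xs) + 2 * a * inner E (Y - X) + 7/2 * a * inner E (\<eta> *\<^sub>R g)"
    using \<open>0 < \<tau>\<close> unfolding P_def a_def by (simp add: inner_simps inner_commute field_simps)
  moreover have "2*\<eta>*(1-\<tau>)/\<tau> * inner E (xs - Yp)
      = - 2 * a / \<tau> * inner E (Y - xs) + 2 * a / \<tau> * inner E ((Y - Xp) + (Xp - Yp))"
    using \<open>0 < \<tau>\<close> unfolding a_def by (simp add: inner_simps field_simps)
  moreover have "\<eta>\<^sup>2 * (4/\<tau>\<^sup>2 + 16/\<tau> + 1/4) * (1-\<tau>)\<^sup>2 * (norm E)\<^sup>2 = a\<^sup>2 * (4 / \<tau>\<^sup>2 + 16 / \<tau> + 1/4) * (norm E)\<^sup>2"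
    unfolding a_def by (simp add: power_mult_distrib)
  moreover have "(norm (P - X))\<^sup>2 = \<eta>\<^sup>2 * (norm g)\<^sup>2" "(norm (\<eta> *\<^sub>R g))\<^sup>2 = \<eta>\<^sup>2 * (norm g)\<^sup>2"
    "(norm (X - Y))\<^sup>2 = (norm (Y - X))\<^sup>2"
    unfolding P_def by (simp_all add: power_mult_distrib norm_minus_commute)
  moreover have "(1/4 - 4*\<rho>/\<eta> - L\<^sup>2*\<eta>/2*(33*\<eta> + 16*\<rho>)) * (norm (Y - X))\<^sup>2
      = (1 - 4*\<rho>/\<eta> - L\<^sup>2*\<eta>/2*(33*\<eta> + 16*\<rho>)) * (norm (Y - X))\<^sup>2 - 3/4 * (norm (Y - X))\<^sup>2"
    "(1/4 - L\<^sup>2*\<eta>/2*(33*\<eta> + 16*\<rho>)) * (norm (Y - Xp))\<^sup>2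
      = 1/4 * (norm (Y - Xp))\<^sup>2 - L\<^sup>2*\<eta>/2*(33*\<eta> + 16*\<rho>) * (norm (Y - Xp))\<^sup>2"
    by (simp_all add: algebra_simps)
  ultimately show ?thesis by linarith
qed

section \<open>Square-integrable random vectors\<close>

definition square_integrable :: "'w measure \<Rightarrow> ('w \<Rightarrow> 'a::euclidean_space) \<Rightarrow> bool" where
  "square_integrable M f \<longleftrightarrow> f \<in> borel_measurable M \<and> integrable M (\<lambda>\<omega>. (norm (f \<omega>))\<^sup>2)"

lemma square_integrable_bound:
  assumes f: "square_integrable M f" and [measurable]: "g \<in> borel_measurable M"
    and bound: "\<And>\<omega>. \<omega> \<in> space M \<Longrightarrow> norm (g \<omega>) \<le> C * norm (f \<omega>)"
  shows "square_integrable M g"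
proof -
  have [measurable]: "f \<in> borel_measurable M" using f by (simp add: square_integrable_def)
  have "integrable M (\<lambda>\<omega>. C\<^sup>2 * (norm (f \<omega>))\<^sup>2)" using f by (simp add: square_integrable_def)
  then have "integrable M (\<lambda>\<omega>. (norm (g \<omega>))\<^sup>2)"
  proof (rule Bochner_Integration.integrable_bound)
    show "AE \<omega> in M. norm ((norm (g \<omega>))\<^sup>2) \<le> norm (C\<^sup>2 * (norm (f \<omega>))\<^sup>2)"
    proof (rule AE_I2)
      fix \<omega> assume "\<omega> \<in> space M"
      then have "(norm (g \<omega>))\<^sup>2 \<le> (C * norm (f \<omega>))\<^sup>2" by (intro power_mono bound) auto
      then show "norm ((norm (g \<omega>))\<^sup>2) \<le> norm (C\<^sup>2 * (norm (f \<omega>))\<^sup>2)" by (simp add: power_mult_distrib)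
    qed
  qed measurable
  then show ?thesis by (simp add: square_integrable_def)
qed

lemma square_integrable_scaleR:
  "square_integrable M f \<Longrightarrow> square_integrable M (\<lambda>\<omega>. c *\<^sub>R f \<omega>)"
  by (rule square_integrable_bound[where C = "\<bar>c\<bar>"]) (auto simp: square_integrable_def)

lemma square_integrable_add:
  assumes f: "square_integrable M f" and g: "square_integrable M g"
  shows "square_integrable M (\<lambda>\<omega>. f \<omega> + g \<omega>)"
proof -
  have [measurable]: "f \<in> borel_measurable M" "g \<in> borel_measurable M"
    using f g by (simp_all add: square_integrable_def)
  have "integrable M (\<lambda>\<omega>. 2 * (norm (f \<omega>))\<^sup>2 + 2 * (norm (g \<omega>))\<^sup>2)"
    using f g by (simp add: square_integrable_def)
  then have "integrable M (\<lambda>\<omega>. (norm (f \<omega> + g \<omega>))\<^sup>2)"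
  proof (rule Bochner_Integration.integrable_bound)
    show "AE \<omega> in M. norm ((norm (f \<omega> + g \<omega>))\<^sup>2) \<le> norm (2 * (norm (f \<omega>))\<^sup>2 + 2 * (norm (g \<omega>))\<^sup>2)"
    proof (rule AE_I2)
      fix \<omega>
      have "(norm (f \<omega> + g \<omega>))\<^sup>2 \<le> (norm (f \<omega>) + norm (g \<omega>))\<^sup>2"
        by (simp add: norm_triangle_ineq power_mono)
      also have "\<dots> \<le> 2 * (norm (f \<omega>))\<^sup>2 + 2 * (norm (g \<omega>))\<^sup>2"
        using sum_squares_bound[of "norm (f \<omega>)" "norm (g \<omega>)"] by (simp add: power2_eq_square algebra_simps)
      finally show "norm ((norm (f \<omega> + g \<omega>))\<^sup>2) \<le> norm (2 * (norm (f \<omega>))\<^sup>2 + 2 * (norm (g \<omega>))\<^sup>2)"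
        by simp
    qed
  qed measurable
  then show ?thesis by (simp add: square_integrable_def)
qed

lemma square_integrable_diff:
  "square_integrable M f \<Longrightarrow> square_integrable M g \<Longrightarrow> square_integrable M (\<lambda>\<omega>. f \<omega> - g \<omega>)"
  using square_integrable_add[of M f "\<lambda>\<omega>. (-1) *\<^sub>R g \<omega>"] square_integrable_scaleR[of M g "-1"] by simp

lemma square_integrable_const:
  "finite_measure M \<Longrightarrow> square_integrable M (\<lambda>_. c)"
  by (simp add: square_integrable_def finite_measure.integrable_const)

lemma square_integrable_lipschitz_comp:
  fixes G :: "'a::euclidean_space \<Rightarrow> 'b::euclidean_space"
  assumes "finite_measure M" and lip: "C-lipschitz_on UNIV G"
    and f: "square_integrable M f"
  shows "square_integrable M (\<lambda>\<omega>. G (f \<omega>))"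
proof -
  have [measurable]: "G \<in> borel_measurable borel"
    using lipschitz_on_continuous_on[OF lip] by (rule borel_measurable_continuous_onI)
  have [measurable]: "f \<in> borel_measurable M" using f by (simp add: square_integrable_def)
  have "norm (G (f \<omega>) - G 0) \<le> C * norm (f \<omega>)" for \<omega>
    using lipschitz_onD[OF lip, of "f \<omega>" 0] by (simp add: dist_norm)
  then have "square_integrable M (\<lambda>\<omega>. G (f \<omega>) - G 0)"
    by (intro square_integrable_bound[OF f]) auto
  from square_integrable_add[OF this square_integrable_const[OF assms(1), of "G 0"]]
  show ?thesis by simp
qed

lemma integrable_inner:
  fixes f g :: "'w \<Rightarrow> 'a::euclidean_space"
  assumes f: "square_integrable M f" and g: "square_integrable M g"
  shows "integrable M (\<lambda>\<omega>. inner (f \<omega>) (g \<omega>))"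
proof -
  have [measurable]: "f \<in> borel_measurable M" "g \<in> borel_measurable M"
    using f g by (simp_all add: square_integrable_def)
  have "integrable M (\<lambda>\<omega>. (norm (f \<omega>))\<^sup>2 + (norm (g \<omega>))\<^sup>2)"
    using f g by (simp add: square_integrable_def)
  then show ?thesis
  proof (rule Bochner_Integration.integrable_bound)
    show "AE \<omega> in M. norm (inner (f \<omega>) (g \<omega>)) \<le> norm ((norm (f \<omega>))\<^sup>2 + (norm (g \<omega>))\<^sup>2)"
    proof (rule AE_I2)
      fix \<omega>
      have "\<bar>inner (f \<omega>) (g \<omega>)\<bar> \<le> norm (f \<omega>) * norm (g \<omega>)" by (rule Cauchy_Schwarz_ineq2)
      also have "\<dots> \<le> (norm (f \<omega>))\<^sup>2 + (norm (g \<omega>))\<^sup>2"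
        using sum_squares_bound[of "norm (f \<omega>)" "norm (g \<omega>)"] mult_nonneg_nonneg[OF norm_ge_zero[of "f \<omega>"] norm_ge_zero[of "g \<omega>"]]
        by linarith
      finally show "norm (inner (f \<omega>) (g \<omega>)) \<le> norm ((norm (f \<omega>))\<^sup>2 + (norm (g \<omega>))\<^sup>2)" by simp
    qed
  qed measurable
qed

lemma integrable_inner_Basis_mult:
  fixes f g :: "'w \<Rightarrow> 'a::euclidean_space"
  assumes f: "square_integrable M f" and g: "square_integrable M g"
  shows "integrable M (\<lambda>\<omega>. (f \<omega> \<bullet> b) * (g \<omega> \<bullet> b))"
proof -
  have [measurable]: "f \<in> borel_measurable M" using f by (simp add: square_integrable_def)
  have "\<bar>f \<omega> \<bullet> b\<bar> * norm b \<le> (norm b)\<^sup>2 * norm (f \<omega>)" for \<omega>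
    using mult_right_mono[OF Cauchy_Schwarz_ineq2[of "f \<omega>" b] norm_ge_zero[of b]]
    by (simp add: power2_eq_square ac_simps)
  then have "square_integrable M (\<lambda>\<omega>. (f \<omega> \<bullet> b) *\<^sub>R b)"
    by (intro square_integrable_bound[OF f]) auto
  from integrable_inner[OF this g] show ?thesis by (simp add: inner_commute)
qed

section \<open>Conditional expectations of quadratic expressions\<close>

context sigma_finite_subalgebra
begin

lemma real_cond_exp_inner:
  fixes V e \<epsilon> :: "'a \<Rightarrow> 'b::euclidean_space"
  assumes [measurable]: "V \<in> borel_measurable F"
    and V: "square_integrable M V" and e: "square_integrable M e"
    and coord: "\<forall>b\<in>Basis. AE \<omega> in M. real_cond_exp M F (\<lambda>\<omega>. e \<omega> \<bullet> b) \<omega> = c * (\<epsilon> \<omega> \<bullet> b)"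
  shows "AE \<omega> in M. real_cond_exp M F (\<lambda>\<omega>. inner (V \<omega>) (e \<omega>)) \<omega> = c * inner (V \<omega>) (\<epsilon> \<omega>)"
proof -
  have [measurable]: "e \<in> borel_measurable M" using e by (simp add: square_integrable_def)
  have inner_sum: "(\<lambda>\<omega>. inner (V \<omega>) (e \<omega>)) = (\<lambda>\<omega>. \<Sum>b\<in>Basis. (V \<omega> \<bullet> b) * (e \<omega> \<bullet> b))"
    by (rule ext) (rule euclidean_inner)
  have int: "\<And>b. integrable M (\<lambda>\<omega>. (V \<omega> \<bullet> b) * (e \<omega> \<bullet> b))"
    by (rule integrable_inner_Basis_mult[OF V e])
  have "AE \<omega> in M. real_cond_exp M F (\<lambda>\<omega>. inner (V \<omega>) (e \<omega>)) \<omega>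
      = (\<Sum>b\<in>Basis. real_cond_exp M F (\<lambda>\<omega>. (V \<omega> \<bullet> b) * (e \<omega> \<bullet> b)) \<omega>)"
    unfolding inner_sum by (rule real_cond_exp_sum[OF int])
  moreover have "AE \<omega> in M. \<forall>b\<in>Basis. real_cond_exp M F (\<lambda>\<omega>. (V \<omega> \<bullet> b) * (e \<omega> \<bullet> b)) \<omega>
      = (V \<omega> \<bullet> b) * real_cond_exp M F (\<lambda>\<omega>. e \<omega> \<bullet> b) \<omega>"
    by (intro AE_finite_allI finite_Basis real_cond_exp_mult int) measurable
  moreover have "AE \<omega> in M. \<forall>b\<in>Basis. real_cond_exp M F (\<lambda>\<omega>. e \<omega> \<bullet> b) \<omega> = c * (\<epsilon> \<omega> \<bullet> b)"
    using coord by (intro AE_finite_allI finite_Basis) blast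
  ultimately show ?thesis
  proof eventually_elim
    case (elim \<omega>)
    then have "real_cond_exp M F (\<lambda>\<omega>. inner (V \<omega>) (e \<omega>)) \<omega> = (\<Sum>b\<in>Basis. (V \<omega> \<bullet> b) * (c * (\<epsilon> \<omega> \<bullet> b)))"
      by simp
    also have "\<dots> = c * inner (V \<omega>) (\<epsilon> \<omega>)"
      unfolding euclidean_inner[of "V \<omega>" "\<epsilon> \<omega>"] by (simp add: sum_distrib_left ac_simps)
    finally show ?case .
  qed
qed

lemma real_cond_exp_quadratic:
  fixes B e \<epsilon> :: "'a \<Rightarrow> 'b::euclidean_space"
  assumes A: "integrable M A" "A \<in> borel_measurable F"
    and B: "B \<in> borel_measurable F" "square_integrable M B"
    and e: "square_integrable M e" and D: "integrable M D"
    and coord: "\<forall>b\<in>Basis. AE \<omega> in M. real_cond_exp M F (\<lambda>\<omega>. e \<omega> \<bullet> b) \<omega> = c * (\<epsilon> \<omega> \<bullet> b)"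
  shows "AE \<omega> in M.
    real_cond_exp M F (\<lambda>\<omega>. A \<omega> + inner (B \<omega>) (e \<omega>) + c\<^sub>1 * (norm (e \<omega>))\<^sup>2 + c\<^sub>2 * D \<omega>) \<omega>
    = A \<omega> + c * inner (B \<omega>) (\<epsilon> \<omega>) + c\<^sub>1 * real_cond_exp M F (\<lambda>\<omega>. (norm (e \<omega>))\<^sup>2) \<omega>
      + c\<^sub>2 * real_cond_exp M F D \<omega>"
proof -
  have iBe: "integrable M (\<lambda>\<omega>. inner (B \<omega>) (e \<omega>))" by (rule integrable_inner[OF B(2) e])
  have ie: "integrable M (\<lambda>\<omega>. (norm (e \<omega>))\<^sup>2)" using e by (simp add: square_integrable_def)
  have "AE \<omega> in M.
    real_cond_exp M F (\<lambda>\<omega>. A \<omega> + inner (B \<omega>) (e \<omega>) + c\<^sub>1 * (norm (e \<omega>))\<^sup>2 + c\<^sub>2 * D \<omega>) \<omega>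
    = real_cond_exp M F (\<lambda>\<omega>. A \<omega> + inner (B \<omega>) (e \<omega>) + c\<^sub>1 * (norm (e \<omega>))\<^sup>2) \<omega>
      + real_cond_exp M F (\<lambda>\<omega>. c\<^sub>2 * D \<omega>) \<omega>"
    using A iBe ie D by (intro real_cond_exp_add) auto
  moreover have "AE \<omega> in M.
    real_cond_exp M F (\<lambda>\<omega>. A \<omega> + inner (B \<omega>) (e \<omega>) + c\<^sub>1 * (norm (e \<omega>))\<^sup>2) \<omega>
    = real_cond_exp M F (\<lambda>\<omega>. A \<omega> + inner (B \<omega>) (e \<omega>)) \<omega>
      + real_cond_exp M F (\<lambda>\<omega>. c\<^sub>1 * (norm (e \<omega>))\<^sup>2) \<omega>"
    using A iBe ie by (intro real_cond_exp_add) auto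
  moreover have "AE \<omega> in M. real_cond_exp M F (\<lambda>\<omega>. A \<omega> + inner (B \<omega>) (e \<omega>)) \<omega>
    = real_cond_exp M F A \<omega> + real_cond_exp M F (\<lambda>\<omega>. inner (B \<omega>) (e \<omega>)) \<omega>"
    using A iBe by (intro real_cond_exp_add)
  moreover have "AE \<omega> in M. real_cond_exp M F A \<omega> = A \<omega>"
    using A by (rule real_cond_exp_F_meas)
  moreover have "AE \<omega> in M. real_cond_exp M F (\<lambda>\<omega>. inner (B \<omega>) (e \<omega>)) \<omega> = c * inner (B \<omega>) (\<epsilon> \<omega>)"
    using B e coord by (rule real_cond_exp_inner)
  moreover have "AE \<omega> in M. real_cond_exp M F (\<lambda>\<omega>. c\<^sub>1 * (norm (e \<omega>))\<^sup>2) \<omega>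
    = c\<^sub>1 * real_cond_exp M F (\<lambda>\<omega>. (norm (e \<omega>))\<^sup>2) \<omega>"
    using ie by (rule real_cond_exp_cmult)
  moreover have "AE \<omega> in M. real_cond_exp M F (\<lambda>\<omega>. c\<^sub>2 * D \<omega>) \<omega> = c\<^sub>2 * real_cond_exp M F D \<omega>"
    using D by (rule real_cond_exp_cmult)
  ultimately show ?thesis by eventually_elim simp
qed

lemma real_cond_exp_norm_sq_ge:
  fixes e \<epsilon> :: "'a \<Rightarrow> 'b::euclidean_space"
  assumes [measurable]: "\<epsilon> \<in> borel_measurable F"
    and \<epsilon>: "square_integrable M \<epsilon>" and e: "square_integrable M e"
    and coord: "\<forall>b\<in>Basis. AE \<omega> in M. real_cond_exp M F (\<lambda>\<omega>. e \<omega> \<bullet> b) \<omega> = c * (\<epsilon> \<omega> \<bullet> b)"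
  shows "AE \<omega> in M. c\<^sup>2 * (norm (\<epsilon> \<omega>))\<^sup>2 \<le> real_cond_exp M F (\<lambda>\<omega>. (norm (e \<omega>))\<^sup>2) \<omega>"
proof -
  have [measurable]: "e \<in> borel_measurable M" "\<epsilon> \<in> borel_measurable M"
    using e \<epsilon> by (simp_all add: square_integrable_def)
  have expand: "(norm (e \<omega> - c *\<^sub>R \<epsilon> \<omega>))\<^sup>2
      = c\<^sup>2 * (norm (\<epsilon> \<omega>))\<^sup>2 + inner ((-2 * c) *\<^sub>R \<epsilon> \<omega>) (e \<omega>) + 1 * (norm (e \<omega>))\<^sup>2 + 0 * 0" for \<omega>
    unfolding power2_norm_eq_inner by (simp add: inner_simps inner_commute algebra_simps power2_eq_square)
  have "AE \<omega> in M. 0 \<le> real_cond_exp M F (\<lambda>\<omega>. (norm (e \<omega> - c *\<^sub>R \<epsilon> \<omega>))\<^sup>2) \<omega>"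
    by (rule real_cond_exp_pos) (simp, measurable)
  moreover have "AE \<omega> in M. real_cond_exp M F (\<lambda>\<omega>. (norm (e \<omega> - c *\<^sub>R \<epsilon> \<omega>))\<^sup>2) \<omega>
      = c\<^sup>2 * (norm (\<epsilon> \<omega>))\<^sup>2 + c * inner ((-2 * c) *\<^sub>R \<epsilon> \<omega>) (\<epsilon> \<omega>)
        + 1 * real_cond_exp M F (\<lambda>\<omega>. (norm (e \<omega>))\<^sup>2) \<omega> + 0 * real_cond_exp M F (\<lambda>_. 0) \<omega>"
    unfolding expand using \<epsilon> e coord
    by (intro real_cond_exp_quadratic square_integrable_scaleR) (auto simp: square_integrable_def)
  ultimately show ?thesis
    by eventually_elim (simp add: power2_norm_eq_inner[symmetric] power2_eq_square algebra_simps)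
qed

end

section \<open>The variance-reduced forward-reflected-backward iteration\<close>

locale vrfrbs =
  fixes G :: "'a::euclidean_space \<Rightarrow> 'a" and T :: "'a \<Rightarrow> 'a set"
    and L \<rho> \<eta> \<tau> \<kappa> \<Theta> \<Theta>h :: real and \<delta> :: "nat \<Rightarrow> real" and xs x0 \<xi>0 :: 'a
    and M :: "'w measure" and F :: "nat \<Rightarrow> 'w measure"
    and x \<xi> St :: "nat \<Rightarrow> 'w \<Rightarrow> 'a" and \<Delta> :: "nat \<Rightarrow> 'w \<Rightarrow> real"
  assumes G_lipschitz: "\<And>u v. (norm (G u - G v))\<^sup>2 \<le> L\<^sup>2 * (norm (u - v))\<^sup>2"
    and minty: "weak_minty G T \<rho> xs"
    and prob: "prob_space M"
    and subalg: "\<And>k. subalgebra M (F k)"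
    and filtration: "\<And>k. sets (F k) \<subseteq> sets (F (Suc k))"
    and x_adapted: "\<And>k. x k \<in> borel_measurable (F k)"
    and St_adapted: "\<And>k. St k \<in> borel_measurable (F (Suc k))"
    and x_sq_int: "\<And>k. integrable M (\<lambda>\<omega>. (norm (x k \<omega>))\<^sup>2)"
    and St_sq_int: "\<And>k. integrable M (\<lambda>\<omega>. (norm (St k \<omega>))\<^sup>2)"
    and \<Delta>_int: "\<And>k. integrable M (\<Delta> k)"
    and eta: "0 < \<eta>"
    and init: "\<And>\<omega>. \<omega> \<in> space M \<Longrightarrow> x 0 \<omega> = x0 \<and> \<xi> 0 \<omega> = \<xi>0" and xi0: "\<xi>0 \<in> T x0"
    and step: "\<And>k \<omega>. \<omega> \<in> space M \<Longrightarrow> x (Suc k) \<omega> \<in> resolvent \<eta> T (x k \<omega> - \<eta> *\<^sub>R St k \<omega>)"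
    and xi_step: "\<And>k \<omega>. \<omega> \<in> space M \<Longrightarrow> \<xi> (Suc k) \<omega> = (1 / \<eta>) *\<^sub>R (x k \<omega> - \<eta> *\<^sub>R St k \<omega> - x (Suc k) \<omega>)"
    and estim: "classB M F G x St \<Delta> \<tau> \<kappa> \<Theta> \<Theta>h \<delta>"
begin

lemma parameter_bounds: "0 < \<tau>" "\<tau> \<le> 1" "0 < \<kappa>" "\<kappa> \<le> 1" "0 \<le> \<Theta>h" "0 \<le> \<rho>"
  using estim minty by (auto simp: classB_def weak_minty_def)

lemma M_finite: "finite_measure M"
  using prob by (simp add: prob_space_def)

lemma G_lipschitz_on: "\<bar>L\<bar>-lipschitz_on UNIV G"
proof (rule lipschitz_onI)
  fix u v
  have "(norm (G u - G v))\<^sup>2 \<le> (\<bar>L\<bar> * norm (u - v))\<^sup>2"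
    using G_lipschitz by (simp add: power_mult_distrib)
  from power2_le_imp_le[OF this] show "dist (G u) (G v) \<le> \<bar>L\<bar> * dist u v"
    by (simp add: dist_norm)
qed simp

lemma G_measurable [measurable]: "G \<in> borel_measurable borel"
  using lipschitz_on_continuous_on[OF G_lipschitz_on] by (rule borel_measurable_continuous_onI)

lemma measurable_F_mono: "j \<le> k \<Longrightarrow> f \<in> measurable (F j) N \<Longrightarrow> f \<in> measurable (F k) N"
proof -
  assume "j \<le> k" "f \<in> measurable (F j) N"
  moreover have "sets (F j) \<subseteq> sets (F k)"
    using lift_Suc_mono_le[of "\<lambda>k. sets (F k)", OF filtration \<open>j \<le> k\<close>] .
  moreover have "space (F j) = space (F k)"
    using subalg[of j] subalg[of k] by (simp add: subalgebra_def)
  ultimately show ?thesis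
    using measurable_from_subalg[of "F k" "F j"] by (simp add: subalgebra_def)
qed

lemma measurable_F_M: "f \<in> measurable (F k) N \<Longrightarrow> f \<in> measurable M N"
  using measurable_from_subalg[OF subalg] .

declare x_adapted [measurable]

lemma x_pred_measurable: "x (k - 1) \<in> borel_measurable (F k)"
  using measurable_F_mono[OF _ x_adapted] by simp

lemma x_measurable [measurable]: "x k \<in> borel_measurable M"
  using measurable_F_M[OF x_adapted] .

lemma St_measurable [measurable]: "St k \<in> borel_measurable M"
  using measurable_F_M[OF St_adapted] .

lemma \<Delta>_measurable [measurable]: "\<Delta> k \<in> borel_measurable M"
  using estim by (simp add: classB_def)

lemma x_square_integrable: "square_integrable M (x k)"
  by (simp add: square_integrable_def x_sq_int)

lemma Gx_square_integrable: "square_integrable M (\<lambda>\<omega>. G (x k \<omega>))"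
  by (rule square_integrable_lipschitz_comp[OF M_finite G_lipschitz_on x_square_integrable])

lemma err_square_integrable: "square_integrable M (errv G x St k)"
proof -
  have "square_integrable M (\<lambda>\<omega>. St k \<omega> - (2 *\<^sub>R G (x k \<omega>) - G (x (k - 1) \<omega>)))"
    using St_sq_int by (intro square_integrable_diff square_integrable_scaleR Gx_square_integrable)
      (simp add: square_integrable_def)
  then show ?thesis by (simp add: errv_def[abs_def])
qed

lemma eprev_Suc: "eprev G x St (Suc j) = errv G x St j"
  by (simp add: eprev_def fun_eq_iff)

lemma eprev_measurable [measurable]: "eprev G x St k \<in> borel_measurable (F k)"
proof (cases k)
  case (Suc j)
  have [measurable]: "x j \<in> borel_measurable (F (Suc j))" "x (j - 1) \<in> borel_measurable (F (Suc j))"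
    using measurable_F_mono[OF _ x_adapted] by auto
  have [measurable]: "St j \<in> borel_measurable (F (Suc j))" by (rule St_adapted)
  show ?thesis unfolding Suc eprev_Suc errv_def[abs_def] by measurable
qed (simp add: eprev_def[abs_def])

lemma eprev_square_integrable: "square_integrable M (eprev G x St k)"
  by (cases k) (simp_all add: eprev_Suc err_square_integrable eprev_def[abs_def]
      square_integrable_const[OF M_finite])

lemma xi_in_T: "\<omega> \<in> space M \<Longrightarrow> \<xi> k \<omega> \<in> T (x k \<omega>)"
proof (cases k)
  case 0
  assume "\<omega> \<in> space M"
  then show ?thesis using init xi0 0 by simp
next
  case (Suc j)
  assume \<omega>: "\<omega> \<in> space M"
  then obtain v where "v \<in> T (x (Suc j) \<omega>)" and "x j \<omega> - \<eta> *\<^sub>R St j \<omega> = x (Suc j) \<omega> + \<eta> *\<^sub>R v"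
    using step[of \<omega> j] by (auto simp: resolvent_def)
  moreover have "\<xi> (Suc j) \<omega> = (1 / \<eta>) *\<^sub>R (x j \<omega> - \<eta> *\<^sub>R St j \<omega> - x (Suc j) \<omega>)"
    using xi_step[OF \<omega>] .
  ultimately show ?thesis using Suc eta by simp
qed

definition ybar :: "nat \<Rightarrow> 'w \<Rightarrow> 'a" where
  "ybar k \<omega> = x k \<omega> - \<eta> *\<^sub>R (G (x k \<omega>) - G (x (k - 1) \<omega>))"

lemma y_Suc: "\<omega> \<in> space M \<Longrightarrow> yv \<eta> G x \<xi> (Suc k) \<omega> = ybar k \<omega> - \<eta> *\<^sub>R errv G x St k \<omega>"
proof -
  assume "\<omega> \<in> space M"
  then have "\<eta> *\<^sub>R \<xi> (Suc k) \<omega> = x k \<omega> - \<eta> *\<^sub>R St k \<omega> - x (Suc k) \<omega>"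
    using xi_step eta by simp
  then show ?thesis
    by (simp add: yv_def ybar_def errv_def scaleR_2 algebra_simps)
qed

lemma ybar_measurable [measurable]: "ybar k \<in> borel_measurable (F k)"
proof -
  have [measurable]: "x k \<in> borel_measurable (F k)" "x (k - 1) \<in> borel_measurable (F k)"
    by (rule x_adapted) (rule x_pred_measurable)
  show ?thesis unfolding ybar_def[abs_def] by measurable
qed

lemma ybar_square_integrable: "square_integrable M (ybar k)"
  unfolding ybar_def[abs_def]
  by (intro square_integrable_diff square_integrable_scaleR x_square_integrable Gx_square_integrable)

(* y^k rewritten through F_k-measurable data: yv itself involves xi^k, about which
   no measurability is assumed. *)
definition y_adapted :: "nat \<Rightarrow> 'w \<Rightarrow> 'a" where
  "y_adapted k \<omega> = (if k = 0 then x0 + \<eta> *\<^sub>R (G x0 + \<xi>0)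
                    else x (k - 1) \<omega> + \<eta> *\<^sub>R (G (x (k - 1) \<omega>) - St (k - 1) \<omega>))"

lemma y_eq_y_adapted: "\<omega> \<in> space M \<Longrightarrow> yv \<eta> G x \<xi> k \<omega> = y_adapted k \<omega>"
proof (cases k)
  case 0
  assume "\<omega> \<in> space M"
  then show ?thesis using init 0 by (simp add: yv_def y_adapted_def)
next
  case (Suc j)
  assume "\<omega> \<in> space M"
  then show ?thesis
    using y_Suc[of \<omega> j] Suc by (simp add: y_adapted_def ybar_def errv_def scaleR_2 algebra_simps)
qed

lemma y_adapted_measurable [measurable]: "y_adapted k \<in> borel_measurable (F k)"
proof (cases k)
  case (Suc j)
  have [measurable]: "x j \<in> borel_measurable (F (Suc j))" "St j \<in> borel_measurable (F (Suc j))"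
    by (rule measurable_F_mono[OF _ x_adapted], simp) (rule St_adapted)
  show ?thesis unfolding y_adapted_def Suc by simp
qed (simp add: y_adapted_def[abs_def])

lemma y_adapted_square_integrable: "square_integrable M (y_adapted k)"
proof (cases k)
  case (Suc j)
  have "square_integrable M (\<lambda>\<omega>. x j \<omega> + \<eta> *\<^sub>R (G (x j \<omega>) - St j \<omega>))"
    using St_sq_int
    by (intro square_integrable_add square_integrable_scaleR square_integrable_diff
        x_square_integrable Gx_square_integrable) (simp add: square_integrable_def)
  then show ?thesis by (simp add: y_adapted_def[abs_def] Suc)
qed (simp add: y_adapted_def[abs_def] square_integrable_const[OF M_finite])

definition Qbar :: "nat \<Rightarrow> 'w \<Rightarrow> real" where
  "Qbar k \<omega> = (norm (ybar k \<omega> - xs))\<^sup>2 + 3/4 * (norm (ybar k \<omega> - x k \<omega>))\<^sup>2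
                + 1/2 * (norm (x k \<omega> - y_adapted k \<omega>))\<^sup>2"

definition Qslope :: "nat \<Rightarrow> 'w \<Rightarrow> 'a" where
  "Qslope k \<omega> = (-2 * \<eta>) *\<^sub>R (ybar k \<omega> - xs) - (3/2 * \<eta>) *\<^sub>R (ybar k \<omega> - x k \<omega>)
                 + (2 * \<eta> * (1 - \<tau>) / \<tau>) *\<^sub>R (xs - y_adapted k \<omega>)"

lemma Qbar_measurable [measurable]: "Qbar k \<in> borel_measurable (F k)"
  unfolding Qbar_def[abs_def] by measurable

lemma Qslope_measurable [measurable]: "Qslope k \<in> borel_measurable (F k)"
  unfolding Qslope_def[abs_def] by measurable

lemma Qbar_integrable: "integrable M (Qbar k)"
proof -
  have "square_integrable M (\<lambda>\<omega>. ybar k \<omega> - xs)" "square_integrable M (\<lambda>\<omega>. ybar k \<omega> - x k \<omega>)"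
    "square_integrable M (\<lambda>\<omega>. x k \<omega> - y_adapted k \<omega>)"
    by (intro square_integrable_diff ybar_square_integrable x_square_integrable
        y_adapted_square_integrable square_integrable_const[OF M_finite])+
  then show ?thesis by (simp add: Qbar_def[abs_def] square_integrable_def)
qed

lemma Qslope_square_integrable: "square_integrable M (Qslope k)"
  unfolding Qslope_def[abs_def]
  by (intro square_integrable_add square_integrable_diff square_integrable_scaleR ybar_square_integrable
      x_square_integrable y_adapted_square_integrable square_integrable_const[OF M_finite])

lemma Qk_Suc:
  assumes "\<omega> \<in> space M"
  shows "Qk \<eta> \<tau> G x \<xi> St xs (Suc k) \<omega>
    = Qbar k \<omega> + inner (Qslope k \<omega>) (errv G x St k \<omega>) + 7/4 * \<eta>\<^sup>2 * (norm (errv G x St k \<omega>))\<^sup>2"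
proof -
  define e where "e = errv G x St k \<omega>"
  have Qk_eq: "Qk \<eta> \<tau> G x \<xi> St xs (Suc k) \<omega>
      = (norm ((ybar k \<omega> - xs) - \<eta> *\<^sub>R e))\<^sup>2 + 3/4 * (norm ((ybar k \<omega> - x k \<omega>) - \<eta> *\<^sub>R e))\<^sup>2
        + 1/2 * (norm (x k \<omega> - y_adapted k \<omega>))\<^sup>2 + 2 * \<eta> * (1 - \<tau>) / \<tau> * inner e (xs - y_adapted k \<omega>)"
  proof -
    have shift: "yv \<eta> G x \<xi> (Suc k) \<omega> - z = (ybar k \<omega> - z) - \<eta> *\<^sub>R e" for z
      by (simp add: y_Suc[OF assms] e_def algebra_simps)
    show ?thesis unfolding Qk_def shift
      by (simp add: yprev_def eprev_def e_def y_eq_y_adapted[OF assms, of k])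
  qed
  have slope_eq: "inner (Qslope k \<omega>) e = -2 * \<eta> * inner (ybar k \<omega> - xs) e - 3/2 * \<eta> * inner (ybar k \<omega> - x k \<omega>) e
      + 2 * \<eta> * (1 - \<tau>) / \<tau> * inner (xs - y_adapted k \<omega>) e"
    by (simp add: Qslope_def inner_add_left inner_diff_left)
  show ?thesis
    unfolding e_def[symmetric] Qk_eq slope_eq power2_norm_diff_scaleR Qbar_def
    by (simp add: inner_commute algebra_simps)
qed

lemma Lk_Suc:
  assumes "\<omega> \<in> space M"
  shows "Lk \<eta> \<tau> \<kappa> \<Theta>h G x \<xi> St \<Delta> xs (Suc k) \<omega>
    = (Qbar k \<omega> + \<Theta>h * \<eta>\<^sup>2 / \<kappa> * (12 / \<tau>\<^sup>2 + 10) * (norm (x k \<omega> - x (k - 1) \<omega>))\<^sup>2)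
      + inner (Qslope k \<omega>) (errv G x St k \<omega>)
      + (7/4 * \<eta>\<^sup>2 + 8 * (1 - \<tau>)\<^sup>2 * \<eta>\<^sup>2 / \<tau>\<^sup>2) * (norm (errv G x St k \<omega>))\<^sup>2
      + (1 - \<kappa>) * \<eta>\<^sup>2 / \<kappa> * (12 / \<tau>\<^sup>2 + 10) * \<Delta> k \<omega>"
proof -
  have "Suc k - 2 = k - 1" by simp
  then show ?thesis
    by (simp add: Lk_def Qk_Suc[OF assms] Dprev_def eprev_def algebra_simps)
qed

lemma cond_exp_Lk_Suc:
  "AE \<omega> in M. real_cond_exp M (F k) (Lk \<eta> \<tau> \<kappa> \<Theta>h G x \<xi> St \<Delta> xs (Suc k)) \<omega>
    = (Qbar k \<omega> + \<Theta>h * \<eta>\<^sup>2 / \<kappa> * (12 / \<tau>\<^sup>2 + 10) * (norm (x k \<omega> - x (k - 1) \<omega>))\<^sup>2)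
      + (1 - \<tau>) * inner (Qslope k \<omega>) (eprev G x St k \<omega>)
      + (7/4 * \<eta>\<^sup>2 + 8 * (1 - \<tau>)\<^sup>2 * \<eta>\<^sup>2 / \<tau>\<^sup>2) * real_cond_exp M (F k) (\<lambda>\<omega>. (norm (errv G x St k \<omega>))\<^sup>2) \<omega>
      + (1 - \<kappa>) * \<eta>\<^sup>2 / \<kappa> * (12 / \<tau>\<^sup>2 + 10) * real_cond_exp M (F k) (\<Delta> k) \<omega>"
proof -
  interpret finite_measure_subalgebra M "F k"
    using M_finite subalg by (simp add: finite_measure_subalgebra_def finite_measure_subalgebra_axioms_def)
  define A where "A \<omega> = Qbar k \<omega> + \<Theta>h * \<eta>\<^sup>2 / \<kappa> * (12 / \<tau>\<^sup>2 + 10) * (norm (x k \<omega> - x (k - 1) \<omega>))\<^sup>2" for \<omega>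
  define c\<^sub>1 c\<^sub>2 where "c\<^sub>1 = 7/4 * \<eta>\<^sup>2 + 8 * (1 - \<tau>)\<^sup>2 * \<eta>\<^sup>2 / \<tau>\<^sup>2" and "c\<^sub>2 = (1 - \<kappa>) * \<eta>\<^sup>2 / \<kappa> * (12 / \<tau>\<^sup>2 + 10)"
  define rhs where "rhs \<omega> = A \<omega> + inner (Qslope k \<omega>) (errv G x St k \<omega>) + c\<^sub>1 * (norm (errv G x St k \<omega>))\<^sup>2
    + c\<^sub>2 * \<Delta> k \<omega>" for \<omega>
  have [measurable]: "x k \<in> borel_measurable (F k)" "x (k - 1) \<in> borel_measurable (F k)"
    by (rule x_adapted) (rule x_pred_measurable)
  have AF [measurable]: "A \<in> borel_measurable (F k)" unfolding A_def[abs_def] by measurable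
  have [measurable]: "A \<in> borel_measurable M" "Qslope k \<in> borel_measurable M"
    by (rule measurable_F_M[OF AF], rule measurable_F_M[OF Qslope_measurable])
  have [measurable]: "errv G x St k \<in> borel_measurable M"
    using err_square_integrable by (simp add: square_integrable_def)
  have "integrable M A"
  proof -
    have "square_integrable M (\<lambda>\<omega>. x k \<omega> - x (k - 1) \<omega>)"
      by (intro square_integrable_diff x_square_integrable)
    then show ?thesis using Qbar_integrable by (simp add: A_def[abs_def] square_integrable_def)
  qed
  have Lk_eq: "\<And>\<omega>. \<omega> \<in> space M \<Longrightarrow> Lk \<eta> \<tau> \<kappa> \<Theta>h G x \<xi> St \<Delta> xs (Suc k) \<omega> = rhs \<omega>"
    by (simp add: Lk_Suc rhs_def A_def c\<^sub>1_def c\<^sub>2_def)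
  have "rhs \<in> borel_measurable M" unfolding rhs_def[abs_def] by measurable
  then have "AE \<omega> in M. real_cond_exp M (F k) (Lk \<eta> \<tau> \<kappa> \<Theta>h G x \<xi> St \<Delta> xs (Suc k)) \<omega>
      = real_cond_exp M (F k) rhs \<omega>"
    using Lk_eq measurable_cong[of M "Lk \<eta> \<tau> \<kappa> \<Theta>h G x \<xi> St \<Delta> xs (Suc k)" rhs]
    by (intro real_cond_exp_cong AE_I2) auto
  moreover have "AE \<omega> in M. real_cond_exp M (F k) rhs \<omega>
    = A \<omega> + (1 - \<tau>) * inner (Qslope k \<omega>) (eprev G x St k \<omega>)
      + c\<^sub>1 * real_cond_exp M (F k) (\<lambda>\<omega>. (norm (errv G x St k \<omega>))\<^sup>2) \<omega>
      + c\<^sub>2 * real_cond_exp M (F k) (\<Delta> k) \<omega>"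
    unfolding rhs_def[abs_def] using estim \<open>integrable M A\<close> AF
    by (intro real_cond_exp_quadratic Qslope_measurable Qslope_square_integrable
        err_square_integrable \<Delta>_int) (simp_all add: classB_def)
  ultimately show ?thesis unfolding A_def c\<^sub>1_def c\<^sub>2_def by eventually_elim simp
qed

lemma Qbar_descent:
  assumes \<omega>: "\<omega> \<in> space M"
  shows "Qbar k \<omega> + (1 - \<tau>) * inner (Qslope k \<omega>) (eprev G x St k \<omega>)
      - \<eta>\<^sup>2 * (4/\<tau>\<^sup>2 + 16/\<tau> + 1/4) * (1-\<tau>)\<^sup>2 * (norm (eprev G x St k \<omega>))\<^sup>2
    \<le> Qk \<eta> \<tau> G x \<xi> St xs k \<omega>
      - (1/4 - 4*\<rho>/\<eta> - L\<^sup>2*\<eta>/2*(33*\<eta> + 16*\<rho>)) * (norm (yv \<eta> G x \<xi> k \<omega> - x k \<omega>))\<^sup>2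
      - (1/4 - L\<^sup>2*\<eta>/2*(33*\<eta> + 16*\<rho>)) * (norm (yv \<eta> G x \<xi> k \<omega> - x (k - 1) \<omega>))\<^sup>2
      - 4*L\<^sup>2*\<eta>\<^sup>2*(norm (x k \<omega> - x (k - 1) \<omega>))\<^sup>2"
proof -
  define g where "g = G (x k \<omega>) - G (x (k - 1) \<omega>)"
  have "G (x k \<omega>) + \<xi> k \<omega> = (1/\<eta>) *\<^sub>R (yv \<eta> G x \<xi> k \<omega> - x k \<omega>) + g"
    using eta by (simp add: yv_def g_def)
  moreover have "inner (G (x k \<omega>) + \<xi> k \<omega>) (x k \<omega> - xs) \<ge> - \<rho> * (norm (G (x k \<omega>) + \<xi> k \<omega>))\<^sup>2"
    using minty xi_in_T[OF \<omega>] by (simp add: weak_minty_def)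
  ultimately have "inner ((1/\<eta>) *\<^sub>R (yv \<eta> G x \<xi> k \<omega> - x k \<omega>) + g) (x k \<omega> - xs)
      \<ge> - \<rho> * (norm ((1/\<eta>) *\<^sub>R (yv \<eta> G x \<xi> k \<omega> - x k \<omega>) + g))\<^sup>2"
    by simp
  from frbs_step_inequality[OF eta parameter_bounds(1,2,6) G_lipschitz[of "x k \<omega>" "x (k - 1) \<omega>", folded g_def] this,
      where Yp = "yprev \<eta> G x \<xi> k \<omega>" and E = "eprev G x St k \<omega>"]
  show ?thesis
    unfolding Qbar_def Qslope_def Qk_def ybar_def g_def[symmetric] y_eq_y_adapted[OF \<omega>] .
qed

lemma lyapunov_step_bound:
  fixes s D :: real
  assumes \<omega>: "\<omega> \<in> space M"
    and jensen: "(1 - \<tau>)\<^sup>2 * (norm (eprev G x St k \<omega>))\<^sup>2 \<le> s" and variance: "s \<le> D"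
    and recursion: "D \<le> (1 - \<kappa>) * Dprev \<Delta> k \<omega> + \<Theta> * (norm (x k \<omega> - x (k - 1) \<omega>))\<^sup>2
      + \<Theta>h * (norm (x (k - 1) \<omega> - x (k - 2) \<omega>))\<^sup>2 + \<delta> k"
  shows "(Qbar k \<omega> + \<Theta>h * \<eta>\<^sup>2 / \<kappa> * (12 / \<tau>\<^sup>2 + 10) * (norm (x k \<omega> - x (k - 1) \<omega>))\<^sup>2)
      + (1 - \<tau>) * inner (Qslope k \<omega>) (eprev G x St k \<omega>)
      + (7/4 * \<eta>\<^sup>2 + 8 * (1 - \<tau>)\<^sup>2 * \<eta>\<^sup>2 / \<tau>\<^sup>2) * s + (1 - \<kappa>) * \<eta>\<^sup>2 / \<kappa> * (12 / \<tau>\<^sup>2 + 10) * D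
    \<le> Lk \<eta> \<tau> \<kappa> \<Theta>h G x \<xi> St \<Delta> xs k \<omega>
        - (1/4 - 4 * \<rho> / \<eta> - L\<^sup>2 * \<eta> / 2 * (33 * \<eta> + 16 * \<rho>)) * (norm (yv \<eta> G x \<xi> k \<omega> - x k \<omega>))\<^sup>2
        - (1/4 - L\<^sup>2 * \<eta> / 2 * (33 * \<eta> + 16 * \<rho>)) * (norm (yv \<eta> G x \<xi> k \<omega> - x (k - 1) \<omega>))\<^sup>2
        - 8 * (1 - \<tau>)\<^sup>2 * \<eta>\<^sup>2 / \<tau>\<^sup>2 * (norm (eprev G x St k \<omega>))\<^sup>2
        - \<eta>\<^sup>2 * (4 * L\<^sup>2 - (12 / \<tau>\<^sup>2 + 10) * (\<Theta> + \<Theta>h) / \<kappa>) * (norm (x k \<omega> - x (k - 1) \<omega>))\<^sup>2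
        + (12 / \<tau>\<^sup>2 + 10) * \<eta>\<^sup>2 * \<delta> k / \<kappa>"
proof -
  let ?E = "(norm (eprev G x St k \<omega>))\<^sup>2" and ?n = "(norm (x k \<omega> - x (k - 1) \<omega>))\<^sup>2"
    and ?C = "12 / \<tau>\<^sup>2 + 10" and ?c = "\<eta>\<^sup>2 * (4/\<tau>\<^sup>2 + 16/\<tau> + 1/4)"
    and ?c\<^sub>1 = "7/4 * \<eta>\<^sup>2 + 8 * (1 - \<tau>)\<^sup>2 * \<eta>\<^sup>2 / \<tau>\<^sup>2"
  let ?R = "Qk \<eta> \<tau> G x \<xi> St xs k \<omega>
    - (1/4 - 4*\<rho>/\<eta> - L\<^sup>2*\<eta>/2*(33*\<eta> + 16*\<rho>)) * (norm (yv \<eta> G x \<xi> k \<omega> - x k \<omega>))\<^sup>2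
    - (1/4 - L\<^sup>2*\<eta>/2*(33*\<eta> + 16*\<rho>)) * (norm (yv \<eta> G x \<xi> k \<omega> - x (k - 1) \<omega>))\<^sup>2
    - 4*L\<^sup>2*\<eta>\<^sup>2*?n + \<Theta>h * \<eta>\<^sup>2 / \<kappa> * ?C * ?n"
  have "?c * s + ?c\<^sub>1 * s = \<eta>\<^sup>2 * ?C * s"
    using parameter_bounds by (simp add: field_simps power2_eq_square)
  have "(Qbar k \<omega> + \<Theta>h * \<eta>\<^sup>2 / \<kappa> * ?C * ?n) + (1 - \<tau>) * inner (Qslope k \<omega>) (eprev G x St k \<omega>)
      + ?c\<^sub>1 * s + (1 - \<kappa>) * \<eta>\<^sup>2 / \<kappa> * ?C * D
    \<le> ?R + ?c * ((1 - \<tau>)\<^sup>2 * ?E) + ?c\<^sub>1 * s + (1 - \<kappa>) * \<eta>\<^sup>2 / \<kappa> * ?C * D"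
    using Qbar_descent[OF \<omega>, of k] mult.assoc[of ?c "(1 - \<tau>)\<^sup>2" ?E] by linarith
  also have "\<dots> \<le> ?R + \<eta>\<^sup>2 * ?C * s + (1 - \<kappa>) * \<eta>\<^sup>2 / \<kappa> * ?C * D"
    using mult_left_mono[OF jensen, of ?c] \<open>?c * s + ?c\<^sub>1 * s = \<eta>\<^sup>2 * ?C * s\<close> parameter_bounds
    by simp
  also have "\<dots> \<le> ?R + \<eta>\<^sup>2 / \<kappa> * ?C * D"
  proof -
    have "\<eta>\<^sup>2 * ?C * s \<le> \<eta>\<^sup>2 * ?C * D"
      using variance by (intro mult_left_mono) simp_all
    moreover have "\<eta>\<^sup>2 * ?C * D + (1 - \<kappa>) * \<eta>\<^sup>2 / \<kappa> * ?C * D = \<eta>\<^sup>2 / \<kappa> * ?C * D"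
      using parameter_bounds by (simp add: field_simps)
    ultimately show ?thesis by linarith
  qed
  also have "\<dots> \<le> ?R + \<eta>\<^sup>2 / \<kappa> * ?C * ((1 - \<kappa>) * Dprev \<Delta> k \<omega>
      + \<Theta> * ?n + \<Theta>h * (norm (x (k - 1) \<omega> - x (k - 2) \<omega>))\<^sup>2 + \<delta> k)"
  proof -
    have "0 \<le> \<eta>\<^sup>2 / \<kappa> * ?C" using parameter_bounds by simp
    from mult_left_mono[OF recursion this] show ?thesis by linarith
  qed
  also have "\<dots> = Lk \<eta> \<tau> \<kappa> \<Theta>h G x \<xi> St \<Delta> xs k \<omega>
    - (1/4 - 4 * \<rho> / \<eta> - L\<^sup>2 * \<eta> / 2 * (33 * \<eta> + 16 * \<rho>)) * (norm (yv \<eta> G x \<xi> k \<omega> - x k \<omega>))\<^sup>2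
    - (1/4 - L\<^sup>2 * \<eta> / 2 * (33 * \<eta> + 16 * \<rho>)) * (norm (yv \<eta> G x \<xi> k \<omega> - x (k - 1) \<omega>))\<^sup>2
    - 8 * (1 - \<tau>)\<^sup>2 * \<eta>\<^sup>2 / \<tau>\<^sup>2 * ?E
    - \<eta>\<^sup>2 * (4 * L\<^sup>2 - ?C * (\<Theta> + \<Theta>h) / \<kappa>) * ?n + ?C * \<eta>\<^sup>2 * \<delta> k / \<kappa>"
    using parameter_bounds unfolding Lk_def by (simp add: field_simps)
  finally show ?thesis .
qed

lemma lyapunov_descent:
  "AE \<omega> in M.
    real_cond_exp M (F k) (Lk \<eta> \<tau> \<kappa> \<Theta>h G x \<xi> St \<Delta> xs (Suc k)) \<omega>
    \<le> Lk \<eta> \<tau> \<kappa> \<Theta>h G x \<xi> St \<Delta> xs k \<omega>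
      - (1/4 - 4 * \<rho> / \<eta> - L\<^sup>2 * \<eta> / 2 * (33 * \<eta> + 16 * \<rho>)) * (norm (yv \<eta> G x \<xi> k \<omega> - x k \<omega>))\<^sup>2
      - (1/4 - L\<^sup>2 * \<eta> / 2 * (33 * \<eta> + 16 * \<rho>)) * (norm (yv \<eta> G x \<xi> k \<omega> - x (k - 1) \<omega>))\<^sup>2
      - 8 * (1 - \<tau>)\<^sup>2 * \<eta>\<^sup>2 / \<tau>\<^sup>2 * (norm (eprev G x St k \<omega>))\<^sup>2
      - \<eta>\<^sup>2 * (4 * L\<^sup>2 - (12 / \<tau>\<^sup>2 + 10) * (\<Theta> + \<Theta>h) / \<kappa>) * (norm (x k \<omega> - x (k - 1) \<omega>))\<^sup>2
      + (12 / \<tau>\<^sup>2 + 10) * \<eta>\<^sup>2 * \<delta> k / \<kappa>"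
proof -
  interpret finite_measure_subalgebra M "F k"
    using M_finite subalg by (simp add: finite_measure_subalgebra_def finite_measure_subalgebra_axioms_def)
  have "AE \<omega> in M. (1 - \<tau>)\<^sup>2 * (norm (eprev G x St k \<omega>))\<^sup>2
      \<le> real_cond_exp M (F k) (\<lambda>\<omega>. (norm (errv G x St k \<omega>))\<^sup>2) \<omega>"
    using estim by (intro real_cond_exp_norm_sq_ge eprev_measurable eprev_square_integrable
        err_square_integrable) (simp add: classB_def)
  moreover have "AE \<omega> in M. real_cond_exp M (F k) (\<lambda>\<omega>. (norm (errv G x St k \<omega>))\<^sup>2) \<omega>
      \<le> real_cond_exp M (F k) (\<Delta> k) \<omega>"
    and "AE \<omega> in M. real_cond_exp M (F k) (\<Delta> k) \<omega> \<le> (1 - \<kappa>) * Dprev \<Delta> k \<omega>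
      + \<Theta> * (norm (x k \<omega> - x (k - 1) \<omega>))\<^sup>2 + \<Theta>h * (norm (x (k - 1) \<omega> - x (k - 2) \<omega>))\<^sup>2 + \<delta> k"
    using estim by (simp_all add: classB_def)
  ultimately show ?thesis
    using cond_exp_Lk_Suc[of k] AE_space
  proof eventually_elim
    case (elim \<omega>)
    show ?case unfolding elim(4) by (rule lyapunov_step_bound[OF elim(5) elim(1-3)])
  qed
qed

lemma lyapunov_lower_bound:
  assumes "\<omega> \<in> space M"
  shows "3/4 * (norm (yv \<eta> G x \<xi> k \<omega> - xs))\<^sup>2 \<le> Lk \<eta> \<tau> \<kappa> \<Theta>h G x \<xi> St \<Delta> xs k \<omega>"
proof -
  define a where "a = \<eta> * (1 - \<tau>) / \<tau>"
  have "0 \<le> Dprev \<Delta> k \<omega>"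
    using estim assms by (auto simp: classB_def Dprev_def)
  then have "0 \<le> \<Theta>h * \<eta>\<^sup>2 / \<kappa> * (12 / \<tau>\<^sup>2 + 10) * (norm (x (k - 1) \<omega> - x (k - 2) \<omega>))\<^sup>2
      + (1 - \<kappa>) * \<eta>\<^sup>2 / \<kappa> * (12 / \<tau>\<^sup>2 + 10) * Dprev \<Delta> k \<omega>"
    using parameter_bounds by simp
  moreover have coeffs: "8 * (1 - \<tau>)\<^sup>2 * \<eta>\<^sup>2 / \<tau>\<^sup>2 = 8 * a\<^sup>2" "2 * \<eta> * (1 - \<tau>) / \<tau> = 2 * a"
    by (simp_all add: a_def power_mult_distrib power_divide)
  moreover have "3/4 * (norm (yv \<eta> G x \<xi> k \<omega> - xs))\<^sup>2 \<le> (norm (yv \<eta> G x \<xi> k \<omega> - xs))\<^sup>2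
      + 3/4 * (norm (yv \<eta> G x \<xi> k \<omega> - x (k - 1) \<omega>))\<^sup>2 + 1/2 * (norm (x (k - 1) \<omega> - yprev \<eta> G x \<xi> k \<omega>))\<^sup>2
      + 2 * a * inner (eprev G x St k \<omega>) (xs - yprev \<eta> G x \<xi> k \<omega>) + 8 * a\<^sup>2 * (norm (eprev G x St k \<omega>))\<^sup>2"
    by (rule lyapunov_lower_bound_vec)
  ultimately show ?thesis unfolding Lk_def Qk_def coeffs by linarith
qed

end

theorem mainTheorem11:
  fixes G :: "'a::euclidean_space \<Rightarrow> 'a" and T :: "'a \<Rightarrow> 'a set"
    and P :: "'z measure" and GG :: "'a \<Rightarrow> 'z \<Rightarrow> 'a" and n :: nat and Gi :: "nat \<Rightarrow> 'a \<Rightarrow> 'a"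
    and \<sigma> L \<rho> \<eta> \<tau> \<kappa> \<Theta> \<Theta>h :: real and \<delta> :: "nat \<Rightarrow> real" and xs x0 \<xi>0 :: 'a
    and M :: "'w measure" and F :: "nat \<Rightarrow> 'w measure"
    and x \<xi> St :: "nat \<Rightarrow> 'w \<Rightarrow> 'a" and \<Delta> :: "nat \<Rightarrow> 'w \<Rightarrow> real"
  assumes setting: "assmA_E G P GG \<sigma> L \<or> assmA_F G n Gi L"
    and G_lip: "\<forall>u v. (norm (G u - G v))\<^sup>2 \<le> L\<^sup>2 * (norm (u - v))\<^sup>2"
    and minty: "weak_minty G T \<rho> xs"
    and prob: "prob_space M"
    and filt: "\<forall>k. subalgebra M (F k) \<and> sets (F k) \<subseteq> sets (F (Suc k))"
    and adapt: "\<forall>k. x k \<in> borel_measurable (F k) \<and> St k \<in> borel_measurable (F (Suc k))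
                   \<and> \<Delta> k \<in> borel_measurable (F (Suc k))"
    and integ: "\<forall>k. integrable M (\<lambda>\<omega>. (norm (x k \<omega>))\<^sup>2) \<and> integrable M (\<lambda>\<omega>. (norm (St k \<omega>))\<^sup>2)
                   \<and> integrable M (\<Delta> k)"
    and eta: "\<eta> > 0"
    and init: "\<forall>\<omega>\<in>space M. x 0 \<omega> = x0 \<and> \<xi> 0 \<omega> = \<xi>0" and xi0: "\<xi>0 \<in> T x0"
    and step: "\<forall>k. \<forall>\<omega>\<in>space M. x (Suc k) \<omega> \<in> resolvent \<eta> T (x k \<omega> - \<eta> *\<^sub>R St k \<omega>)"
    and xi_def: "\<forall>k. \<forall>\<omega>\<in>space M.
                   \<xi> (Suc k) \<omega> = (1 / \<eta>) *\<^sub>R (x k \<omega> - \<eta> *\<^sub>R St k \<omega> - x (Suc k) \<omega>)"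
    and estim: "classB M F G x St \<Delta> \<tau> \<kappa> \<Theta> \<Theta>h \<delta>"
  shows "(\<forall>k. AE \<omega> in M.
            real_cond_exp M (F k) (Lk \<eta> \<tau> \<kappa> \<Theta>h G x \<xi> St \<Delta> xs (Suc k)) \<omega>
            \<le> Lk \<eta> \<tau> \<kappa> \<Theta>h G x \<xi> St \<Delta> xs k \<omega>
              - (1/4 - 4 * \<rho> / \<eta> - L\<^sup>2 * \<eta> / 2 * (33 * \<eta> + 16 * \<rho>))
                  * (norm (yv \<eta> G x \<xi> k \<omega> - x k \<omega>))\<^sup>2
              - (1/4 - L\<^sup>2 * \<eta> / 2 * (33 * \<eta> + 16 * \<rho>))
                  * (norm (yv \<eta> G x \<xi> k \<omega> - x (k - 1) \<omega>))\<^sup>2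
              - 8 * (1 - \<tau>)\<^sup>2 * \<eta>\<^sup>2 / \<tau>\<^sup>2 * (norm (eprev G x St k \<omega>))\<^sup>2
              - \<eta>\<^sup>2 * (4 * L\<^sup>2 - (12 / \<tau>\<^sup>2 + 10) * (\<Theta> + \<Theta>h) / \<kappa>)
                  * (norm (x k \<omega> - x (k - 1) \<omega>))\<^sup>2
              + (12 / \<tau>\<^sup>2 + 10) * \<eta>\<^sup>2 * \<delta> k / \<kappa>)
         \<and> (\<forall>k. AE \<omega> in M.
              Lk \<eta> \<tau> \<kappa> \<Theta>h G x \<xi> St \<Delta> xs k \<omega> \<ge> 3/4 * (norm (yv \<eta> G x \<xi> k \<omega> - xs))\<^sup>2)"
proof -
  interpret vrfrbs G T L \<rho> \<eta> \<tau> \<kappa> \<Theta> \<Theta>h \<delta> xs x0 \<xi>0 M F x \<xi> St \<Delta>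
    using G_lip minty prob filt adapt integ eta init xi0 step xi_def estim by (intro vrfrbs.intro) simp_all
  show ?thesis
    by (intro conjI allI lyapunov_descent AE_I2 lyapunov_lower_bound)
qed

end
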